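(* Let $D_1,D_2$ be two mutually $g$-orthogonal slant distributions on $M$ having the same slant angle $\theta\in(0,\frac{\pi}{2}]$. For $Z\in T_x\overline M$ ($x\in M$) let $fZ$ denote the orthogonal projection of $\varphi Z$ onto $(D_1\oplus D_2)_x$. Assume that (i) for all $x\in M$ and all $u,v\in (D_1\oplus D_2)_x$ with $g(u,v)=0$ one has $g(\varphi u,\varphi v)=0$; and (ii) $f(D_1)\subseteq D_1$ and $f(D_2)\subseteq D_2$. Then $D_1\oplus D_2$ is a slant distribution with slant angle $\theta$.
   Context: Let $(\overline M,g)$ be a smooth Riemannian manifold, fix $\epsilon\in\{-1,1\}$, and let $\varphi$ be a smooth $(1,1)$-tensor field on $\overline M$ with $g(\varphi X,Y)=\epsilon\, g(X,\varphi Y)$ for all vector fields $X,Y$. Let $M$ be either $\overline M$ itself or an immersed submanifold of $\overline M$ (points of $M$ are identified with their images). A distribution on $M$ means a smooth subbundle of constant rank of $T\overline M|_M$; its vector fields are its smooth sections; it is non-null if it is not $\{0\}$. The angle between a nonzero vector $u\in T_x\overline M$ and a linear subspace $V\subseteq T_x\overline M$ is the number $\theta\in[0,\frac{\pi}{2}]$ with $\cos\theta=\|\mathrm{pr}_V u\|/\|u\|$, where $\mathrm{pr}_V$ is the $g$-orthogonal projection onto $V$. A non-null distribution $D$ on $M$ is a slant distribution with slant angle $\theta\in(0,\frac{\pi}{2}]$ (a $\theta$-slant distribution) if for every $x\in M$ and every $v\in D_x\setminus\{0\}$ one has $\varphi v\neq 0$ and the angle between $\varphi v$ and $D_x$ equals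 $\theta$ (independent of $x$ and $v$). *)

theory Defs
  imports "HOL-Analysis.Analysis"
begin

text \<open>Pointwise model: every tangent space of the ambient manifold at a point of M
  is modelled (via an orthonormal frame) by a fixed finite-dimensional real inner
  product space 'a, the inner product being g.\<close>

definition proj :: "'a::euclidean_space set \<Rightarrow> 'a \<Rightarrow> 'a" where
  "proj V u = (THE p. p \<in> V \<and> (\<forall>w\<in>V. inner (u - p) w = 0))"

definition vangle :: "'a::euclidean_space \<Rightarrow> 'a set \<Rightarrow> real" where
  "vangle u V = arccos (norm (proj V u) / norm u)"

text \<open>A distribution on M: a subspace of each tangent space, of constant rank
  (smoothness is not modelled).\<close>
definition is_distribution :: "'p set \<Rightarrow> ('p \<Rightarrow> 'a::euclidean_space set) \<Rightarrow> bool" where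
  "is_distribution M D \<longleftrightarrow> (\<forall>x\<in>M. subspace (D x)) \<and>
     (\<forall>x\<in>M. \<forall>y\<in>M. dim (D x) = dim (D y))"

definition non_null :: "'p set \<Rightarrow> ('p \<Rightarrow> 'a::euclidean_space set) \<Rightarrow> bool" where
  "non_null M D \<longleftrightarrow> (\<exists>x\<in>M. D x \<noteq> {0})"

definition slant_distribution ::
  "'p set \<Rightarrow> ('p \<Rightarrow> 'a \<Rightarrow> 'a::euclidean_space) \<Rightarrow> ('p \<Rightarrow> 'a set) \<Rightarrow> real \<Rightarrow> bool" where
  "slant_distribution M \<phi> D \<theta> \<longleftrightarrow>
     is_distribution M D \<and> non_null M D \<and> 0 < \<theta> \<and> \<theta> \<le> pi / 2 \<and>
     (\<forall>x\<in>M. \<forall>v\<in>D x. v \<noteq> 0 \<longrightarrow> \<phi> x v \<noteq> 0 \<and> vangle (\<phi> x v) (D x) = \<theta>)"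

definition structure_tensor :: "('p \<Rightarrow> 'a \<Rightarrow> 'a::euclidean_space) \<Rightarrow> real \<Rightarrow> bool" where
  "structure_tensor \<phi> \<epsilon> \<longleftrightarrow> (\<epsilon> = 1 \<or> \<epsilon> = -1) \<and> (\<forall>x. linear (\<phi> x)) \<and>
     (\<forall>x X Y. inner (\<phi> x X) Y = \<epsilon> * inner X (\<phi> x Y))"

end

theory Submission
  imports Defs
begin

text \<open>Write \<open>P\<close> for the projection onto \<open>D\<^sub>1 \<oplus> D\<^sub>2\<close> and split \<open>v = v\<^sub>1 + v\<^sub>2\<close> with
  \<open>v\<^sub>i \<in> D\<^sub>i\<close>. Hypothesis (ii) says that \<open>P(\<phi> v\<^sub>i)\<close> is already the projection of \<open>\<phi> v\<^sub>i\<close>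
  onto \<open>D\<^sub>i\<close>, so \<open>|P(\<phi> v\<^sub>i)| = cos \<theta> |\<phi> v\<^sub>i|\<close>. Both \<open>P(\<phi> v) = P(\<phi> v\<^sub>1) + P(\<phi> v\<^sub>2)\<close>
  and, by hypothesis (i), \<open>\<phi> v = \<phi> v\<^sub>1 + \<phi> v\<^sub>2\<close> are orthogonal sums, so Pythagoras gives
  \<open>|P(\<phi> v)|\<^sup>2 = cos\<^sup>2 \<theta> (|\<phi> v\<^sub>1|\<^sup>2 + |\<phi> v\<^sub>2|\<^sup>2) = cos\<^sup>2 \<theta> |\<phi> v|\<^sup>2\<close>.\<close>

lemma proj_eq_iff:
  fixes V :: "'a::euclidean_space set"
  assumes "subspace V"
  shows "proj V u = p \<longleftrightarrow> p \<in> V \<and> (\<forall>w\<in>V. inner (u - p) w = 0)"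
proof -
  have unique: "q = p" if "p \<in> V" "\<forall>w\<in>V. inner (u - p) w = 0"
    and "q \<in> V" "\<forall>w\<in>V. inner (u - q) w = 0" for p q
  proof -
    have "q - p \<in> V" using assms that by (simp add: subspace_diff)
    then have "inner (u - p) (q - p) = 0" "inner (u - q) (q - p) = 0" using that by auto
    then have "inner (q - p) (q - p) = 0" by (simp add: inner_diff_left)
    then show "q = p" by simp
  qed
  obtain y z where "y \<in> span V" "\<And>w. w \<in> span V \<Longrightarrow> orthogonal z w" "u = y + z"
    using orthogonal_subspace_decomp_exists by blast
  moreover have "span V = V"
    using assms by (simp add: span_eq_iff)
  ultimately have y: "y \<in> V \<and> (\<forall>w\<in>V. inner (u - y) w = 0)"
    by (auto simp: orthogonal_def)
  then have "proj V u = y"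
    unfolding proj_def by (rule the_equality) (use unique y in blast)
  then show ?thesis using unique y by blast
qed

lemma proj_in:
  fixes V :: "'a::euclidean_space set"
  assumes "subspace V"
  shows "proj V u \<in> V"
  using proj_eq_iff[OF assms] by blast

lemma inner_diff_proj:
  fixes V :: "'a::euclidean_space set"
  assumes "subspace V" "w \<in> V"
  shows "inner (u - proj V u) w = 0"
  using proj_eq_iff[OF assms(1)] assms(2) by blast

lemma proj_add:
  fixes V :: "'a::euclidean_space set"
  assumes "subspace V"
  shows "proj V (a + b) = proj V a + proj V b"
proof -
  have "inner (a + b - (proj V a + proj V b)) w = 0" if "w \<in> V" for w
    using inner_diff_proj[OF assms that, of a] inner_diff_proj[OF assms that, of b]
    by (simp add: inner_diff_left inner_add_left)
  then show ?thesis
    using assms by (simp add: proj_eq_iff proj_in subspace_add)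
qed

lemma proj_subspace_eq:
  fixes U V :: "'a::euclidean_space set"
  assumes "subspace U" "subspace V" "U \<subseteq> V" "proj V u \<in> U"
  shows "proj U u = proj V u"
  using assms by (auto simp: proj_eq_iff inner_diff_proj)

lemma norm_proj_le:
  fixes V :: "'a::euclidean_space set"
  assumes "subspace V"
  shows "norm (proj V u) \<le> norm u"
proof -
  have "orthogonal (proj V u) (u - proj V u)"
    using inner_diff_proj[OF assms proj_in[OF assms]] by (simp add: orthogonal_def inner_commute)
  then have "(norm u)\<^sup>2 = (norm (proj V u))\<^sup>2 + (norm (u - proj V u))\<^sup>2"
    using norm_add_Pythagorean by fastforce
  then have "(norm (proj V u))\<^sup>2 \<le> (norm u)\<^sup>2" by simp
  then show ?thesis by (rule power2_le_imp_le) simp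
qed

lemma norm_proj_eq_cos_vangle:
  fixes V :: "'a::euclidean_space set"
  assumes "subspace V" "w \<noteq> 0"
  shows "norm (proj V w) = cos (vangle w V) * norm w"
proof -
  have "0 \<le> norm (proj V w) / norm w" "norm (proj V w) / norm w \<le> 1"
    using norm_proj_le[OF assms(1), of w] assms(2) by auto
  then have "cos (arccos (norm (proj V w) / norm w)) = norm (proj V w) / norm w"
    by (intro cos_arccos) linarith+
  then show ?thesis using assms(2) by (simp add: vangle_def cos_arccos)
qed

lemma vangle_eqI:
  fixes V :: "'a::euclidean_space set"
  assumes "norm (proj V w) = cos \<theta> * norm w" "w \<noteq> 0" "0 \<le> \<theta>" "\<theta> \<le> pi"
  shows "vangle w V = \<theta>"
  using assms by (simp add: vangle_def arccos_cos)

lemma subspace_set_plus: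
  fixes U W :: "'a::real_vector set"
  assumes "subspace U" "subspace W"
  shows "subspace (U + W)"
proof -
  have "U + W = {u + w |u w. u \<in> U \<and> w \<in> W}"
    by (auto simp: set_plus_def)
  then show ?thesis using subspace_sums[OF assms] by simp
qed

lemma set_plus_in_left: "subspace W \<Longrightarrow> u \<in> U \<Longrightarrow> u \<in> U + W"
  using set_plus_intro[of u U 0 W] by (simp add: subspace_0)

lemma set_plus_in_right: "subspace U \<Longrightarrow> w \<in> W \<Longrightarrow> w \<in> U + W"
  using set_plus_intro[of 0 U w W] by (simp add: subspace_0)

lemma dim_set_plus_orthogonal:
  fixes U W :: "'a::euclidean_space set"
  assumes "subspace U" "subspace W" "\<forall>u\<in>U. \<forall>w\<in>W. inner u w = 0"
  shows "dim (U + W) = dim U + dim W"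
proof -
  have "x = 0" if "x \<in> U" "x \<in> W" for x
    using assms(3) that by (metis inner_eq_zero_iff)
  then have "U \<inter> W = {0}"
    using assms(1,2) by (auto simp: subspace_0)
  moreover have "U + W = {u + w |u w. u \<in> U \<and> w \<in> W}"
    by (auto simp: set_plus_def)
  ultimately show ?thesis
    using dim_sums_Int[OF assms(1,2)] by simp
qed

lemma is_distribution_set_plus:
  assumes "is_distribution M D1" "is_distribution M D2"
    and "\<forall>x\<in>M. \<forall>u\<in>D1 x. \<forall>v\<in>D2 x. inner u v = 0"
  shows "is_distribution M (\<lambda>x. D1 x + D2 x)"
proof -
  have "subspace (D1 x + D2 x) \<and> dim (D1 x + D2 x) = dim (D1 x) + dim (D2 x)" if "x \<in> M" for x
  proof -
    have "subspace (D1 x)" "subspace (D2 x)"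
      using assms(1,2) that by (simp_all add: is_distribution_def)
    then show ?thesis
      using assms(3) that subspace_set_plus dim_set_plus_orthogonal by blast
  qed
  with assms(1,2) show ?thesis
    unfolding is_distribution_def by metis
qed

lemma non_null_set_plus:
  assumes "non_null M D1" "is_distribution M D1" "is_distribution M D2"
  shows "non_null M (\<lambda>x. D1 x + D2 x)"
proof -
  obtain x where "x \<in> M" "D1 x \<noteq> {0}"
    using assms(1) by (auto simp: non_null_def)
  moreover have "subspace (D1 x)" "subspace (D2 x)"
    using assms(2,3) \<open>x \<in> M\<close> by (simp_all add: is_distribution_def)
  ultimately obtain u where "u \<in> D1 x" "u \<noteq> 0"
    using subspace_0 by blast
  then show ?thesis
    unfolding non_null_def using \<open>x \<in> M\<close> \<open>subspace (D2 x)\<close> set_plus_in_left by fastforce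
qed

definition slant_subspace :: "('a \<Rightarrow> 'a::euclidean_space) \<Rightarrow> 'a set \<Rightarrow> real \<Rightarrow> bool" where
  "slant_subspace f V \<theta> \<longleftrightarrow> (\<forall>v\<in>V. v \<noteq> 0 \<longrightarrow> f v \<noteq> 0 \<and> vangle (f v) V = \<theta>)"

lemma slant_distribution_iff:
  "slant_distribution M \<phi> D \<theta> \<longleftrightarrow> is_distribution M D \<and> non_null M D \<and>
     0 < \<theta> \<and> \<theta> \<le> pi / 2 \<and> (\<forall>x\<in>M. slant_subspace (\<phi> x) (D x) \<theta>)"
  by (simp add: slant_distribution_def slant_subspace_def)

lemma norm_proj_slant_subspace:
  assumes "slant_subspace f V \<theta>" "linear f" "subspace V" "v \<in> V"
  shows "norm (proj V (f v)) = cos \<theta> * norm (f v)"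
proof (cases "v = 0")
  case True
  then show ?thesis
    using assms by (simp add: linear_0 proj_eq_iff subspace_0)
next
  case False
  then have "f v \<noteq> 0" "vangle (f v) V = \<theta>"
    using assms(1,4) by (auto simp: slant_subspace_def)
  then show ?thesis
    using norm_proj_eq_cos_vangle[OF assms(3)] by simp
qed

lemma slant_subspace_orthogonal_sum:
  assumes "linear f" "subspace U" "subspace W" "0 \<le> \<theta>" "\<theta> \<le> pi / 2"
    and "slant_subspace f U \<theta>" "slant_subspace f W \<theta>"
    and orth: "\<forall>u\<in>U. \<forall>w\<in>W. inner u w = 0"
    and orth_image: "\<forall>u\<in>U. \<forall>w\<in>W. inner (f u) (f w) = 0"
    and proj_U: "\<forall>u\<in>U. proj (U + W) (f u) \<in> U"
    and proj_W: "\<forall>w\<in>W. proj (U + W) (f w) \<in> W"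
  shows "slant_subspace f (U + W) \<theta>"
  unfolding slant_subspace_def
proof (intro ballI impI)
  fix v assume "v \<in> U + W" "v \<noteq> 0"
  then obtain u w where uw: "u \<in> U" "w \<in> W" "v = u + w"
    by (meson set_plus_elim)
  with \<open>v \<noteq> 0\<close> have "u \<noteq> 0 \<or> w \<noteq> 0"
    by auto
  let ?P = "proj (U + W)"
  have sub: "subspace (U + W)"
    using assms(2,3) by (rule subspace_set_plus)
  have fv: "f v = f u + f w"
    using uw assms(1) by (simp add: linear_add)
  have Pfv: "?P (f v) = ?P (f u) + ?P (f w)"
    using sub fv by (simp add: proj_add)
  have "?P (f u) = proj U (f u)" "?P (f w) = proj W (f w)"
    using assms(2,3) uw proj_U proj_W
    by (auto intro!: proj_subspace_eq[symmetric] sub simp: set_plus_in_left set_plus_in_right)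
  then have norm_Pfu: "norm (?P (f u)) = cos \<theta> * norm (f u)"
    and norm_Pfw: "norm (?P (f w)) = cos \<theta> * norm (f w)"
    using assms uw norm_proj_slant_subspace by auto
  have norm_fv: "(norm (f v))\<^sup>2 = (norm (f u))\<^sup>2 + (norm (f w))\<^sup>2"
    unfolding fv using orth_image uw by (intro norm_add_Pythagorean) (simp add: orthogonal_def)
  have "(norm (?P (f v)))\<^sup>2 = (norm (?P (f u)))\<^sup>2 + (norm (?P (f w)))\<^sup>2"
    unfolding Pfv using orth uw proj_U proj_W
    by (intro norm_add_Pythagorean) (simp add: orthogonal_def)
  also have "\<dots> = (cos \<theta> * norm (f v))\<^sup>2"
    using norm_Pfu norm_Pfw norm_fv by (simp add: power_mult_distrib algebra_simps)
  finally have norm_Pfv: "norm (?P (f v)) = cos \<theta> * norm (f v)"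
    using assms(4,5) by (simp add: power2_eq_iff_nonneg cos_ge_zero)
  have "f u \<noteq> 0 \<or> f w \<noteq> 0"
    using uw \<open>u \<noteq> 0 \<or> w \<noteq> 0\<close> assms(6,7) by (auto simp: slant_subspace_def)
  then have "f v \<noteq> 0"
    using norm_fv by (auto simp: add_nonneg_eq_0_iff)
  moreover have "vangle (f v) (U + W) = \<theta>"
    using norm_Pfv \<open>f v \<noteq> 0\<close> assms(4,5) by (intro vangle_eqI) auto
  ultimately show "f v \<noteq> 0 \<and> vangle (f v) (U + W) = \<theta>" ..
qed

theorem mainTheorem1:
  fixes M :: "'p set" and \<phi> :: "'p \<Rightarrow> 'a \<Rightarrow> 'a::euclidean_space" and \<epsilon> :: real
    and D1 D2 :: "'p \<Rightarrow> 'a set" and \<theta> :: real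
  assumes "structure_tensor \<phi> \<epsilon>"
    and "slant_distribution M \<phi> D1 \<theta>"
    and "slant_distribution M \<phi> D2 \<theta>"
    and "\<forall>x\<in>M. \<forall>u\<in>D1 x. \<forall>v\<in>D2 x. inner u v = 0"
    and "\<forall>x\<in>M. \<forall>u\<in>D1 x + D2 x. \<forall>v\<in>D1 x + D2 x.
           inner u v = 0 \<longrightarrow> inner (\<phi> x u) (\<phi> x v) = 0"
    and "\<forall>x\<in>M. \<forall>u\<in>D1 x. proj (D1 x + D2 x) (\<phi> x u) \<in> D1 x"
    and "\<forall>x\<in>M. \<forall>u\<in>D2 x. proj (D1 x + D2 x) (\<phi> x u) \<in> D2 x"
  shows "slant_distribution M \<phi> (\<lambda>x. D1 x + D2 x) \<theta>"
proof -
  have lin: "linear (\<phi> x)" for x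
    using assms(1) by (simp add: structure_tensor_def)
  have dist: "is_distribution M D1" "is_distribution M D2" "0 < \<theta>" "\<theta> \<le> pi / 2"
    using assms(2,3) by (simp_all add: slant_distribution_iff)
  have "slant_subspace (\<phi> x) (D1 x + D2 x) \<theta>" if "x \<in> M" for x
  proof (rule slant_subspace_orthogonal_sum[OF lin])
    show "subspace (D1 x)" "subspace (D2 x)"
      using dist that by (simp_all add: is_distribution_def)
    then show "\<forall>u\<in>D1 x. \<forall>w\<in>D2 x. inner (\<phi> x u) (\<phi> x w) = 0"
      using assms(4,5) that by (simp add: set_plus_in_left set_plus_in_right)
  qed (use assms dist that in \<open>auto simp: slant_distribution_iff\<close>)
  then show ?thesis
    using assms(2,4) dist
    by (simp add: slant_distribution_iff is_distribution_set_plus non_null_set_plus)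
qed

end
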